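(* For a positive integer $k$ let $A(k)=\{(\frac{c}{k},\frac{d}{k}): c,d\in\mathbb{N}\cup\{0\},\ \frac{c}{k}+\frac{d}{k}\le 1\}$, viewed as a collection of alternatives. Let $x\approx 0.39$ be the unique solution in $[0,\frac12]$ of $x^3-x+\frac13=0$. Then for every $k$ and every $\delta>0$, all pure Nash equilibrium outcomes of $\Gamma_{\mathcal{SA}_\delta}(A(k))$ are $(\delta+\frac1k)$-close to the segment $\mathrm{conv}((x,1-x),(1-x,x))$.
   Context: Two players bargain over a finite collection of alternatives $A=(a^j)_{j\in[n]}\subset[0,1]^2$, $a^j_i$ being player $i$'s utility. The mechanism $\mathcal{SA}_\delta$ ($0<\delta\le1$): each player submits $L_i\subseteq[n]$; the index is drawn from the uniform distribution $UN([n])$ if $L_1=L_2=\emptyset$; from $UN(L_1\cup L_2)$ if $L_1\cap L_2=\emptyset\ne L_1\cup L_2$; and from $(1-\delta)UN(L_1\cap L_2)+\delta\,UN(L_1\cup L_2)$ if $L_1\cap L_2\neq\emptyset$. With risk-neutral players this defines a game $\Gamma_{\mathcal{SA}_\delta}(A)$ with expected-utility payoffs; an equilibrium outcome is the vector of expected utilities. *)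

theory Defs
  imports "HOL-Analysis.Analysis"
begin

text \<open>Alternatives are given by a finite nonempty index set I and a utility map
  a : I \<rightarrow> [0,1]^2 (first component = player 1, second = player 2).\<close>

definition unif_avg :: "'i set \<Rightarrow> ('i \<Rightarrow> real \<times> real) \<Rightarrow> real \<times> real" where
  "unif_avg J a = (1 / real (card J)) *\<^sub>R (\<Sum>j\<in>J. a j)"

text \<open>Expected utility vector of the mechanism SA_delta when the players submit L1, L2.\<close>

definition SA_outcome ::
  "real \<Rightarrow> 'i set \<Rightarrow> ('i \<Rightarrow> real \<times> real) \<Rightarrow> 'i set \<Rightarrow> 'i set \<Rightarrow> real \<times> real" where
  "SA_outcome \<delta> I a L1 L2 =
     (if L1 = {} \<and> L2 = {} then unif_avg I a
      else if L1 \<inter> L2 = {} then unif_avg (L1 \<union> L2) a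
      else (1 - \<delta>) *\<^sub>R unif_avg (L1 \<inter> L2) a + \<delta> *\<^sub>R unif_avg (L1 \<union> L2) a)"

definition SA_pure_NE ::
  "real \<Rightarrow> 'i set \<Rightarrow> ('i \<Rightarrow> real \<times> real) \<Rightarrow> 'i set \<Rightarrow> 'i set \<Rightarrow> bool" where
  "SA_pure_NE \<delta> I a L1 L2 \<longleftrightarrow>
     L1 \<subseteq> I \<and> L2 \<subseteq> I \<and>
     (\<forall>L1'. L1' \<subseteq> I \<longrightarrow> fst (SA_outcome \<delta> I a L1' L2) \<le> fst (SA_outcome \<delta> I a L1 L2)) \<and>
     (\<forall>L2'. L2' \<subseteq> I \<longrightarrow> snd (SA_outcome \<delta> I a L1 L2') \<le> snd (SA_outcome \<delta> I a L1 L2))"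

definition Ak_index :: "nat \<Rightarrow> (nat \<times> nat) set" where
  "Ak_index k = {(c, d). c + d \<le> k}"

definition Ak_util :: "nat \<Rightarrow> nat \<times> nat \<Rightarrow> real \<times> real" where
  "Ak_util k p = (real (fst p) / real k, real (snd p) / real k)"

end

theory Submission
  imports Defs
begin

text \<open>Let \<open>U = L1 \<union> L2\<close>, let \<open>h\<close> be the mean of U and \<open>\<alpha>\<close> the mean of \<open>L1 \<inter> L2\<close> (of U if
  the intersection is empty), so that the outcome is \<open>(1 - \<delta>) \<alpha> + \<delta> h\<close>. Unilateral deviations
  that add or drop a single alternative show: alternatives outside U are below \<open>h\<close> in both
  coordinates, each alternative in \<open>L\<^sub>i\<close> is at least \<open>h\<close> for player \<open>i\<close>, \<open>h \<le> \<alpha>\<close>, and no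
  alternative beats \<open>\<alpha>\<close> for both players. The last fact puts \<open>\<alpha>\<close> within \<open>1/k\<close> of the line
  \<open>u + v = 1\<close>. Counting the lattice points of A(k) against the first two facts gives
  \<open>N (k/3 - H\<^sub>1) + H\<^sub>1\<^sup>2 H\<^sub>2 / 2 \<le> 0\<close> and its mirror image for the integer coordinates
  \<open>H = k h\<close>, with \<open>N = |A(k)|\<close>; eliminating \<open>H\<^sub>2\<close> yields a cubic inequality showing
  \<open>h\<^sub>i \<ge> x - 1/(2k)\<close>. Hence \<open>\<alpha>\<close> is within \<open>1/k\<close> of the segment, and the \<open>\<delta>\<close>-weighted
  remainder moves the outcome by at most \<open>\<delta>\<close>.\<close>

definition avg :: "('i \<Rightarrow> real) \<Rightarrow> 'i set \<Rightarrow> real" where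
  "avg f T = sum f T / real (card T)"

lemma fst_unif_avg: "fst (unif_avg J a) = avg (fst \<circ> a) J"
  by (simp add: unif_avg_def avg_def fst_sum)

lemma snd_unif_avg: "snd (unif_avg J a) = avg (snd \<circ> a) J"
  by (simp add: unif_avg_def avg_def snd_sum)

lemma avg_singleton [simp]: "avg f {j} = f j"
  by (simp add: avg_def)

lemma avg_insert:
  assumes "finite T" "j \<notin> T"
  shows "avg f (insert j T) = (real (card T) * avg f T + f j) / (real (card T) + 1)"
  using assms by (cases "T = {}") (auto simp: avg_def add.commute)

lemma avg_insert_le_imp_le:
  assumes "finite T" "j \<notin> T" "avg f (insert j T) \<le> avg f T"
  shows "f j \<le> avg f T"
proof -
  have "real (card T) * avg f T + f j \<le> (real (card T) + 1) * avg f T"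
    using assms by (simp add: avg_insert divide_le_eq add_pos_nonneg mult.commute)
  then show ?thesis
    by (simp add: algebra_simps)
qed

lemma avg_remove_le_imp_le:
  assumes "finite T" "j \<in> T" "avg f (T - {j}) \<le> avg f T"
  shows "avg f T \<le> f j"
proof -
  define n where "n = real (card (T - {j}))"
  have n: "0 \<le> n"
    by (simp add: n_def)
  have T: "T = insert j (T - {j})"
    using assms(2) by blast
  have avg_T: "avg f T = (n * avg f (T - {j}) + f j) / (n + 1)"
    using avg_insert[of "T - {j}" j f] assms(1) T n_def by simp
  have "(n + 1) * avg f (T - {j}) \<le> n * avg f (T - {j}) + f j"
    using assms(3) n by (simp add: avg_T le_divide_eq add_pos_nonneg mult.commute)
  then have "n * avg f (T - {j}) + f j \<le> (n + 1) * f j"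
    using n by (simp add: algebra_simps mult_left_mono)
  then show ?thesis
    using n by (simp add: avg_T divide_le_eq add_pos_nonneg mult.commute)
qed

lemma avg_eq_if_avg_le_all:
  assumes "finite T" "\<And>i. i \<in> T \<Longrightarrow> avg f T \<le> f i" "j \<in> T"
  shows "f j = avg f T"
proof -
  have "real (card T) > 0"
    using assms by (auto simp: card_gt_0_iff)
  then have "(\<Sum>i\<in>T. f i - avg f T) = 0"
    by (simp add: sum_subtractf avg_def)
  then show ?thesis
    using sum_nonneg_eq_0_iff[OF assms(1), of "\<lambda>i. f i - avg f T"] assms(2,3) by auto
qed

section \<open>The two players' roles\<close>

definition swap_util :: "('i \<Rightarrow> real \<times> real) \<Rightarrow> 'i \<Rightarrow> real \<times> real" where
  "swap_util a = prod.swap \<circ> a"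

lemma comp_swap_util [simp]: "fst \<circ> swap_util a = snd \<circ> a" "snd \<circ> swap_util a = fst \<circ> a"
  by (auto simp: swap_util_def)

lemma swap_util_apply [simp]: "swap_util a j = prod.swap (a j)"
  by (simp add: swap_util_def)

lemma unif_avg_swap_util: "unif_avg J (swap_util a) = prod.swap (unif_avg J a)"
  by (simp add: prod_eq_iff fst_unif_avg snd_unif_avg swap_util_def comp_def)

lemma SA_outcome_swap_util:
  "SA_outcome \<delta> I (swap_util a) L2 L1 = prod.swap (SA_outcome \<delta> I a L1 L2)"
  by (simp add: SA_outcome_def unif_avg_swap_util prod_eq_iff Int_commute Un_commute conj_commute)

lemma SA_pure_NE_swap_util:
  "SA_pure_NE \<delta> I a L1 L2 \<Longrightarrow> SA_pure_NE \<delta> I (swap_util a) L2 L1"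
  unfolding SA_pure_NE_def SA_outcome_swap_util by simp

definition SA_core :: "('i \<Rightarrow> real \<times> real) \<Rightarrow> 'i set \<Rightarrow> 'i set \<Rightarrow> real \<times> real" where
  "SA_core a L1 L2 = unif_avg (if L1 \<inter> L2 = {} then L1 \<union> L2 else L1 \<inter> L2) a"

lemma SA_core_swap_util: "SA_core (swap_util a) L2 L1 = prod.swap (SA_core a L1 L2)"
  by (simp add: SA_core_def unif_avg_swap_util Int_commute Un_commute)

lemma SA_outcome_eq_core:
  "L1 \<union> L2 \<noteq> {} \<Longrightarrow>
     SA_outcome \<delta> I a L1 L2 = (1 - \<delta>) *\<^sub>R SA_core a L1 L2 + \<delta> *\<^sub>R unif_avg (L1 \<union> L2) a"
  by (auto simp: SA_outcome_def SA_core_def simp flip: scaleR_add_left)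

lemma fst_SA_outcome:
  "L1 \<union> L2 \<noteq> {} \<Longrightarrow> fst (SA_outcome \<delta> I a L1 L2) =
     (if L1 \<inter> L2 = {} then avg (fst \<circ> a) (L1 \<union> L2)
      else (1 - \<delta>) * avg (fst \<circ> a) (L1 \<inter> L2) + \<delta> * avg (fst \<circ> a) (L1 \<union> L2))"
  by (auto simp: SA_outcome_def fst_unif_avg)

section \<open>Best responses of the first player\<close>

lemma SA_pure_NE_fst_le:
  "SA_pure_NE \<delta> I a L1 L2 \<Longrightarrow> L1' \<subseteq> I \<Longrightarrow>
     fst (SA_outcome \<delta> I a L1' L2) \<le> fst (SA_outcome \<delta> I a L1 L2)"
  unfolding SA_pure_NE_def by blast

lemma SA_pure_NE_subset: "SA_pure_NE \<delta> I a L1 L2 \<Longrightarrow> L1 \<subseteq> I \<and> L2 \<subseteq> I"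
  unfolding SA_pure_NE_def by blast

lemma SA_pure_NE_empty_le_avg:
  assumes "SA_pure_NE \<delta> I a {} {}" "j \<in> I"
  shows "fst (a j) \<le> avg (fst \<circ> a) I"
  using SA_pure_NE_fst_le[OF assms(1), of "{j}"] assms(2) by (simp add: SA_outcome_def fst_unif_avg)

lemma SA_pure_NE_unlisted_le_avg_union:
  assumes "finite I" "SA_pure_NE \<delta> I a L1 L2" "0 < \<delta>"
    and "L1 \<union> L2 \<noteq> {}" "j \<in> I" "j \<notin> L1 \<union> L2"
  shows "fst (a j) \<le> avg (fst \<circ> a) (L1 \<union> L2)"
proof -
  have sub: "L1 \<subseteq> I" "L2 \<subseteq> I"
    using SA_pure_NE_subset[OF assms(2)] by auto
  have fin: "finite (L1 \<union> L2)"
    using sub assms(1) by (meson finite_Un finite_subset)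
  have dev: "fst (SA_outcome \<delta> I a (insert j L1) L2) \<le> fst (SA_outcome \<delta> I a L1 L2)"
    using SA_pure_NE_fst_le[OF assms(2)] sub assms(5) by simp
  have "insert j L1 \<inter> L2 = L1 \<inter> L2" "insert j L1 \<union> L2 = insert j (L1 \<union> L2)"
    using assms(6) by auto
  then have "avg (fst \<circ> a) (insert j (L1 \<union> L2)) \<le> avg (fst \<circ> a) (L1 \<union> L2)"
    using dev fst_SA_outcome[of "insert j L1" L2 \<delta> I a] fst_SA_outcome[of L1 L2 \<delta> I a] assms(3,4)
    by (cases "L1 \<inter> L2 = {}") simp_all
  then show ?thesis
    using avg_insert_le_imp_le[OF fin, of j "fst \<circ> a"] assms(6) by simp
qed

lemma SA_pure_NE_exclusive_ge_avg_union:
  assumes "finite I" "SA_pure_NE \<delta> I a L1 L2" "0 < \<delta>" "j \<in> L1" "j \<notin> L2"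
  shows "avg (fst \<circ> a) (L1 \<union> L2) \<le> fst (a j)"
proof (cases "L1 \<union> L2 = {j}")
  case False
  have sub: "L1 \<subseteq> I" "L2 \<subseteq> I"
    using SA_pure_NE_subset[OF assms(2)] by auto
  have fin: "finite (L1 \<union> L2)"
    using sub assms(1) by (meson finite_Un finite_subset)
  have dev: "fst (SA_outcome \<delta> I a (L1 - {j}) L2) \<le> fst (SA_outcome \<delta> I a L1 L2)"
    using SA_pure_NE_fst_le[OF assms(2), of "L1 - {j}"] sub by auto
  have "(L1 - {j}) \<inter> L2 = L1 \<inter> L2" "(L1 - {j}) \<union> L2 = (L1 \<union> L2) - {j}"
    "(L1 \<union> L2) - {j} \<noteq> {}" "L1 \<union> L2 \<noteq> {}"
    using assms(4,5) False by auto
  then have "avg (fst \<circ> a) ((L1 \<union> L2) - {j}) \<le> avg (fst \<circ> a) (L1 \<union> L2)"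
    using dev fst_SA_outcome[of "L1 - {j}" L2 \<delta> I a] fst_SA_outcome[of L1 L2 \<delta> I a] assms(3)
    by (cases "L1 \<inter> L2 = {}") simp_all
  then show ?thesis
    using avg_remove_le_imp_le[OF fin, of j "fst \<circ> a"] assms(4) by simp
qed simp

lemma SA_pure_NE_common_ge_avg_inter:
  assumes "finite I" "SA_pure_NE \<delta> I a L1 L2" "\<delta> < 1" "j \<in> L1 \<inter> L2"
  shows "avg (fst \<circ> a) (L1 \<inter> L2) \<le> fst (a j)"
proof (cases "L1 \<inter> L2 = {j}")
  case False
  have sub: "L1 \<subseteq> I" "L2 \<subseteq> I"
    using SA_pure_NE_subset[OF assms(2)] by auto
  have fin: "finite (L1 \<inter> L2)"
    using sub assms(1) by (meson finite_Int finite_subset)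
  have dev: "fst (SA_outcome \<delta> I a (L1 - {j}) L2) \<le> fst (SA_outcome \<delta> I a L1 L2)"
    using SA_pure_NE_fst_le[OF assms(2), of "L1 - {j}"] sub by auto
  have "(L1 - {j}) \<inter> L2 = (L1 \<inter> L2) - {j}" "(L1 - {j}) \<union> L2 = L1 \<union> L2"
    "(L1 \<inter> L2) - {j} \<noteq> {}" "L1 \<inter> L2 \<noteq> {}" "L1 \<union> L2 \<noteq> {}"
    using assms(4) False by auto
  then have "avg (fst \<circ> a) ((L1 \<inter> L2) - {j}) \<le> avg (fst \<circ> a) (L1 \<inter> L2)"
    using dev fst_SA_outcome[of "L1 - {j}" L2 \<delta> I a] fst_SA_outcome[of L1 L2 \<delta> I a] assms(3)
    by simp
  then show ?thesis
    using avg_remove_le_imp_le[OF fin assms(4), of "fst \<circ> a"] by simp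
qed simp

lemma SA_pure_NE_avg_union_le_avg_inter:
  assumes "SA_pure_NE \<delta> I a L1 L2" "\<delta> < 1" "L1 \<inter> L2 \<noteq> {}"
  shows "avg (fst \<circ> a) (L1 \<union> L2) \<le> avg (fst \<circ> a) (L1 \<inter> L2)"
proof -
  have dev: "fst (SA_outcome \<delta> I a (L1 - L2) L2) \<le> fst (SA_outcome \<delta> I a L1 L2)"
    using SA_pure_NE_fst_le[OF assms(1), of "L1 - L2"] SA_pure_NE_subset[OF assms(1)] by auto
  have "(L1 - L2) \<inter> L2 = {}" "(L1 - L2) \<union> L2 = L1 \<union> L2" "L1 \<union> L2 \<noteq> {}"
    using assms(3) by auto
  then have "(1 - \<delta>) * avg (fst \<circ> a) (L1 \<union> L2) \<le> (1 - \<delta>) * avg (fst \<circ> a) (L1 \<inter> L2)"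
    using dev fst_SA_outcome[of "L1 - L2" L2 \<delta> I a] fst_SA_outcome[of L1 L2 \<delta> I a] assms(3)
    by (simp add: algebra_simps)
  then show ?thesis
    using assms(2) by simp
qed

lemma SA_pure_NE_opponent_le_avg_inter:
  assumes "finite I" "SA_pure_NE \<delta> I a L1 L2" "\<delta> < 1"
    and "L1 \<inter> L2 \<noteq> {}" "j \<in> L2" "j \<notin> L1"
  shows "fst (a j) \<le> avg (fst \<circ> a) (L1 \<inter> L2)"
proof -
  have sub: "L1 \<subseteq> I" "L2 \<subseteq> I"
    using SA_pure_NE_subset[OF assms(2)] by auto
  have fin: "finite (L1 \<inter> L2)"
    using sub assms(1) by (meson finite_Int finite_subset)
  have dev: "fst (SA_outcome \<delta> I a (insert j L1) L2) \<le> fst (SA_outcome \<delta> I a L1 L2)"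
    using SA_pure_NE_fst_le[OF assms(2), of "insert j L1"] sub assms(5) by auto
  have "insert j L1 \<inter> L2 = insert j (L1 \<inter> L2)" "insert j L1 \<union> L2 = L1 \<union> L2" "L1 \<union> L2 \<noteq> {}"
    using assms(4,5) by auto
  then have "avg (fst \<circ> a) (insert j (L1 \<inter> L2)) \<le> avg (fst \<circ> a) (L1 \<inter> L2)"
    using dev fst_SA_outcome[of "insert j L1" L2 \<delta> I a] fst_SA_outcome[of L1 L2 \<delta> I a] assms(3,4)
    by simp
  then show ?thesis
    using avg_insert_le_imp_le[OF fin, of j "fst \<circ> a"] assms(6) by simp
qed

lemma SA_pure_NE_disjoint_opponent_le_avg_union:
  assumes "SA_pure_NE \<delta> I a L1 L2" "\<delta> < 1" "L1 \<inter> L2 = {}" "j \<in> L2"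
  shows "fst (a j) \<le> avg (fst \<circ> a) (L1 \<union> L2)"
proof -
  have dev: "fst (SA_outcome \<delta> I a (insert j L1) L2) \<le> fst (SA_outcome \<delta> I a L1 L2)"
    using SA_pure_NE_fst_le[OF assms(1), of "insert j L1"] SA_pure_NE_subset[OF assms(1)] assms(4)
    by auto
  have "insert j L1 \<inter> L2 = {j}" "insert j L1 \<union> L2 = L1 \<union> L2" "L1 \<union> L2 \<noteq> {}"
    using assms(3,4) by auto
  then have "(1 - \<delta>) * fst (a j) \<le> (1 - \<delta>) * avg (fst \<circ> a) (L1 \<union> L2)"
    using dev fst_SA_outcome[of "insert j L1" L2 \<delta> I a] fst_SA_outcome[of L1 L2 \<delta> I a] assms(3)
    by (simp add: algebra_simps)
  then show ?thesis
    using assms(2) by simp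
qed

lemma SA_pure_NE_listed_ge_avg_union:
  assumes "finite I" "SA_pure_NE \<delta> I a L1 L2" "0 < \<delta>" "\<delta> < 1" "j \<in> L1"
  shows "avg (fst \<circ> a) (L1 \<union> L2) \<le> fst (a j)"
proof (cases "j \<in> L2")
  case True
  then have j: "j \<in> L1 \<inter> L2"
    using assms(5) by blast
  then have "avg (fst \<circ> a) (L1 \<union> L2) \<le> avg (fst \<circ> a) (L1 \<inter> L2)"
    using SA_pure_NE_avg_union_le_avg_inter[OF assms(2,4)] by blast
  also have "\<dots> \<le> fst (a j)"
    by (rule SA_pure_NE_common_ge_avg_inter[OF assms(1,2,4) j])
  finally show ?thesis .
next
  case False
  then show ?thesis
    by (rule SA_pure_NE_exclusive_ge_avg_union[OF assms(1-3,5)])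
qed

lemma SA_pure_NE_avg_union_le_core:
  assumes "SA_pure_NE \<delta> I a L1 L2" "\<delta> < 1"
  shows "fst (unif_avg (L1 \<union> L2) a) \<le> fst (SA_core a L1 L2)"
  using SA_pure_NE_avg_union_le_avg_inter[OF assms]
  by (simp add: SA_core_def fst_unif_avg)

lemma SA_pure_NE_opponent_listed_le_core:
  assumes "finite I" "SA_pure_NE \<delta> I a L1 L2" "\<delta> < 1" "j \<in> L2"
  shows "fst (a j) \<le> fst (SA_core a L1 L2)"
proof -
  have "fst (a j) \<le> avg (fst \<circ> a) (L1 \<inter> L2)" if C: "L1 \<inter> L2 \<noteq> {}"
  proof (cases "j \<in> L1")
    case j1: True
    have fin: "finite (L1 \<inter> L2)"
      using SA_pure_NE_subset[OF assms(2)] assms(1) by (meson finite_Int finite_subset)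
    have ge: "\<And>i. i \<in> L1 \<inter> L2 \<Longrightarrow> avg (fst \<circ> a) (L1 \<inter> L2) \<le> (fst \<circ> a) i"
      using SA_pure_NE_common_ge_avg_inter[OF assms(1-3)] by simp
    have "j \<in> L1 \<inter> L2"
      using j1 assms(4) by blast
    then have "(fst \<circ> a) j = avg (fst \<circ> a) (L1 \<inter> L2)"
      using avg_eq_if_avg_le_all[OF fin ge] by blast
    then show ?thesis
      by simp
  qed (use SA_pure_NE_opponent_le_avg_inter[OF assms(1-3) C assms(4)] in simp)
  then show ?thesis
    using SA_pure_NE_disjoint_opponent_le_avg_union[OF assms(2,3) _ assms(4)]
    by (simp add: SA_core_def fst_unif_avg)
qed

lemma SA_pure_NE_unlisted_below_avg:
  assumes "finite I" "SA_pure_NE \<delta> I a L1 L2" "0 < \<delta>"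
    and "L1 \<union> L2 \<noteq> {}" "j \<in> I" "j \<notin> L1 \<union> L2"
  shows "fst (a j) \<le> fst (unif_avg (L1 \<union> L2) a) \<and> snd (a j) \<le> snd (unif_avg (L1 \<union> L2) a)"
  using SA_pure_NE_unlisted_le_avg_union[OF assms]
    SA_pure_NE_unlisted_le_avg_union[OF assms(1) SA_pure_NE_swap_util[OF assms(2)] assms(3), of j]
    assms(4-6)
  by (simp add: fst_unif_avg snd_unif_avg Un_commute)

lemma SA_pure_NE_listed_not_below_avg:
  assumes "finite I" "SA_pure_NE \<delta> I a L1 L2" "0 < \<delta>" "\<delta> < 1" "j \<in> L1 \<union> L2"
  shows "fst (unif_avg (L1 \<union> L2) a) \<le> fst (a j) \<or> snd (unif_avg (L1 \<union> L2) a) \<le> snd (a j)"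
  using SA_pure_NE_listed_ge_avg_union[OF assms(1-4), of j]
    SA_pure_NE_listed_ge_avg_union[OF assms(1) SA_pure_NE_swap_util[OF assms(2)] assms(3,4), of j]
    assms(5)
  by (auto simp: fst_unif_avg snd_unif_avg Un_commute)

lemma SA_pure_NE_avg_le_core:
  assumes "SA_pure_NE \<delta> I a L1 L2" "\<delta> < 1"
  shows "fst (unif_avg (L1 \<union> L2) a) \<le> fst (SA_core a L1 L2)
    \<and> snd (unif_avg (L1 \<union> L2) a) \<le> snd (SA_core a L1 L2)"
  using SA_pure_NE_avg_union_le_core[OF assms]
    SA_pure_NE_avg_union_le_core[OF SA_pure_NE_swap_util[OF assms(1)] assms(2)]
  by (simp add: unif_avg_swap_util SA_core_swap_util Un_commute)

lemma SA_pure_NE_core_undominated: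
  assumes "finite I" "SA_pure_NE \<delta> I a L1 L2" "0 < \<delta>" "\<delta> < 1"
    and "L1 \<union> L2 \<noteq> {}" "j \<in> I"
  shows "fst (a j) \<le> fst (SA_core a L1 L2) \<or> snd (a j) \<le> snd (SA_core a L1 L2)"
proof (cases "j \<in> L1 \<union> L2")
  case True
  then show ?thesis
    using SA_pure_NE_opponent_listed_le_core[OF assms(1,2,4), of j]
      SA_pure_NE_opponent_listed_le_core[OF assms(1) SA_pure_NE_swap_util[OF assms(2)] assms(4), of j]
    by (auto simp: SA_core_swap_util)
next
  case False
  then show ?thesis
    using SA_pure_NE_unlisted_below_avg[OF assms(1-3,5,6)] SA_pure_NE_avg_le_core[OF assms(2,4)]
    by auto
qed

section \<open>Geometry of the utility plane\<close>

definition utility_triangle :: "(real \<times> real) set" where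
  "utility_triangle = {z. 0 \<le> fst z \<and> 0 \<le> snd z \<and> fst z + snd z \<le> 1}"

lemma convex_utility_triangle: "convex utility_triangle"
proof (rule convexI)
  fix z w :: "real \<times> real" and u v :: real
  assume z: "z \<in> utility_triangle" and w: "w \<in> utility_triangle"
    and uv: "0 \<le> u" "0 \<le> v" "u + v = 1"
  have "u * (fst z + snd z) + v * (fst w + snd w) \<le> u * 1 + v * 1"
    using z w uv by (intro add_mono mult_left_mono) (auto simp: utility_triangle_def)
  then show "u *\<^sub>R z + v *\<^sub>R w \<in> utility_triangle"
    using z w uv by (auto simp: utility_triangle_def algebra_simps)
qed

lemma unif_avg_mem_convex:
  assumes "convex T" "0 \<in> T" "finite J" "\<And>j. j \<in> J \<Longrightarrow> a j \<in> T"
  shows "unif_avg J a \<in> T"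
proof (cases "J = {}")
  case False
  have "(\<Sum>j\<in>J. 1 / real (card J)) = 1"
    using False assms(3) by simp
  then have "(\<Sum>j\<in>J. (1 / real (card J)) *\<^sub>R a j) \<in> T"
    by (rule convex_sum[OF assms(3,1)]) (use assms(4) in auto)
  then show ?thesis
    by (simp add: unif_avg_def scaleR_sum_right)
qed (simp add: unif_avg_def assms(2))

lemma SA_outcome_mem_convex:
  assumes "convex T" "0 \<in> T" "finite I" "\<And>j. j \<in> I \<Longrightarrow> a j \<in> T"
    and "L1 \<subseteq> I" "L2 \<subseteq> I" "0 \<le> \<delta>" "\<delta> \<le> 1"
  shows "SA_outcome \<delta> I a L1 L2 \<in> T"
proof -
  have avg_T: "unif_avg J a \<in> T" if "J \<subseteq> I" for J
    using unif_avg_mem_convex[OF assms(1,2)] finite_subset[OF that assms(3)] assms(4) that by blast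
  have "(1 - \<delta>) *\<^sub>R unif_avg (L1 \<inter> L2) a + \<delta> *\<^sub>R unif_avg (L1 \<union> L2) a \<in> T"
    by (rule convexD[OF assms(1)]) (use avg_T[of "L1 \<inter> L2"] avg_T[of "L1 \<union> L2"] assms(5-8) in auto)
  then show ?thesis
    using avg_T[of I] avg_T[of "L1 \<inter> L2"] avg_T[of "L1 \<union> L2"] assms(5,6)
    by (simp add: SA_outcome_def le_supI le_infI1)
qed

lemma dist_half_half_le_one:
  assumes "z \<in> utility_triangle"
  shows "dist z (1/2, 1/2) \<le> 1"
proof -
  have sq: "(t - 1/2)\<^sup>2 \<le> 1/4" if "0 \<le> t" "t \<le> 1" for t :: real
  proof -
    have "(t - 1/2)\<^sup>2 = 1/4 - t * (1 - t)"
      by (simp add: power2_eq_square algebra_simps)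
    then show ?thesis
      using that by simp
  qed
  have "(fst z - 1/2)\<^sup>2 + (snd z - 1/2)\<^sup>2 \<le> 1"
    using sq[of "fst z"] sq[of "snd z"] assms by (simp add: utility_triangle_def)
  then have "sqrt ((fst z - 1/2)\<^sup>2 + (snd z - 1/2)\<^sup>2) \<le> 1"
    by simp
  then show ?thesis
    by (simp add: dist_prod_def dist_real_def)
qed

lemma antidiagonal_mem_segment:
  fixes x t :: real
  assumes "x < 1/2" "x \<le> t" "t \<le> 1 - x"
  shows "(t, 1 - t) \<in> convex hull {(x, 1 - x), (1 - x, x)}"
proof -
  define u where "u = (t - x) / (1 - 2 * x)"
  have u: "0 \<le> u" "u \<le> 1" "u * (1 - 2 * x) = t - x"
    using assms by (auto simp: u_def divide_simps)
  then have "(t, 1 - t) = (1 - u) *\<^sub>R (x, 1 - x) + u *\<^sub>R (1 - x, x)"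
    by (simp add: algebra_simps)
  then show ?thesis
    using u unfolding segment_convex_hull[symmetric] in_segment by blast
qed

text \<open>Project \<open>(a1, a2)\<close> orthogonally onto the line \<open>u + v = 1\<close> and clamp to the segment.\<close>

lemma near_segment:
  fixes x r a1 a2 :: real
  assumes "x < 1/2" "0 \<le> r" "1 - r \<le> a1 + a2" "a1 + a2 \<le> 1" "x - r/2 \<le> a1" "x - r/2 \<le> a2"
  shows "\<exists>p \<in> convex hull {(x, 1 - x), (1 - x, x)}. dist (a1, a2) p \<le> r"
proof -
  define t where "t = max x (min (1 - x) ((1 + a1 - a2) / 2))"
  have t: "x \<le> t" "t \<le> 1 - x"
    using assms(1) by (auto simp: t_def)
  have "\<bar>a1 - t\<bar> \<le> r/2 \<and> \<bar>a2 - (1 - t)\<bar> \<le> r/2"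
  proof (cases "(1 + a1 - a2) / 2 \<le> x")
    case True
    then have "t = x"
      using assms(1) by (simp add: t_def)
    then show ?thesis
      unfolding abs_le_iff using True assms by (simp add: field_simps)
  next
    case False
    show ?thesis
    proof (cases "1 - x \<le> (1 + a1 - a2) / 2")
      case True
      then have "t = 1 - x"
        using assms(1) by (simp add: t_def)
      then show ?thesis
        unfolding abs_le_iff using True assms by (simp add: field_simps)
    next
      case inside: False
      then have "t = (1 + a1 - a2) / 2"
        using False by (simp add: t_def)
      then show ?thesis
        unfolding abs_le_iff using assms by (simp add: field_simps)
    qed
  qed
  then have "(a1 - t)\<^sup>2 \<le> (r/2)\<^sup>2" "(a2 - (1 - t))\<^sup>2 \<le> (r/2)\<^sup>2"
    using assms(2) by (simp_all add: abs_le_square_iff[symmetric])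
  moreover have "(r/2)\<^sup>2 = r\<^sup>2 / 4"
    by (simp add: power_divide)
  ultimately have "(a1 - t)\<^sup>2 + (a2 - (1 - t))\<^sup>2 \<le> r\<^sup>2"
    using zero_le_power2[of r] by linarith
  then have "sqrt ((a1 - t)\<^sup>2 + (a2 - (1 - t))\<^sup>2) \<le> sqrt (r\<^sup>2)"
    by (rule real_sqrt_le_mono)
  then have "dist (a1, a2) (t, 1 - t) \<le> r"
    using assms(2) by (simp add: dist_Pair_Pair dist_real_def)
  then show ?thesis
    using antidiagonal_mem_segment[OF assms(1) t] by blast
qed

lemma infdist_convex_combination_le:
  fixes z w :: "'a::real_normed_vector"
  assumes "convex S" "p \<in> S" "q \<in> S" "0 \<le> \<delta>" "\<delta> \<le> 1"
  shows "infdist ((1 - \<delta>) *\<^sub>R z + \<delta> *\<^sub>R w) S \<le> (1 - \<delta>) * dist z p + \<delta> * dist w q"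
proof -
  have "(1 - \<delta>) *\<^sub>R p + \<delta> *\<^sub>R q \<in> S"
    using assms by (intro convexD) auto
  then have "infdist ((1 - \<delta>) *\<^sub>R z + \<delta> *\<^sub>R w) S
      \<le> norm ((1 - \<delta>) *\<^sub>R (z - p) + \<delta> *\<^sub>R (w - q))"
    by (rule infdist_le2) (simp add: dist_norm algebra_simps)
  also have "\<dots> \<le> (1 - \<delta>) * dist z p + \<delta> * dist w q"
    using norm_triangle_ineq[of "(1 - \<delta>) *\<^sub>R (z - p)" "\<delta> *\<^sub>R (w - q)"] assms(4,5)
    by (simp add: dist_norm)
  finally show ?thesis .
qed

lemma Ak_index_eq_Sigma: "Ak_index k = Sigma {..k} (\<lambda>c. {..k - c})"
  by (auto simp: Ak_index_def)

lemma finite_Ak_index [simp]: "finite (Ak_index k)"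
  by (simp add: Ak_index_eq_Sigma)

lemma swap_mem_Ak_index [simp]: "prod.swap p \<in> Ak_index k \<longleftrightarrow> p \<in> Ak_index k"
  by (cases p) (auto simp: Ak_index_def)

lemma Ak_util_mem_triangle: "0 < k \<Longrightarrow> p \<in> Ak_index k \<Longrightarrow> Ak_util k p \<in> utility_triangle"
  by (cases p) (auto simp: Ak_index_def Ak_util_def utility_triangle_def
      divide_le_eq_1 simp flip: add_divide_distrib)

lemma unif_avg_Ak_util:
  "unif_avg J (Ak_util k) = (avg (real \<circ> fst) J / real k, avg (real \<circ> snd) J / real k)"
  by (simp add: prod_eq_iff fst_unif_avg snd_unif_avg avg_def Ak_util_def comp_def
      sum_divide_distrib[symmetric])

lemma sum_Ak_index_fst:
  fixes g :: "nat \<Rightarrow> real"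
  shows "(\<Sum>p\<in>Ak_index k. g (fst p)) = (\<Sum>c\<le>k. real (k - c + 1) * g c)"
proof -
  have "(\<Sum>p\<in>Ak_index k. g (fst p)) = (\<Sum>c\<le>k. \<Sum>d\<le>k - c. g c)"
    unfolding Ak_index_eq_Sigma by (subst sum.Sigma) (auto simp: split_def)
  then show ?thesis
    by simp
qed

lemma sum_atMost_real: "(\<Sum>c\<le>k. real c) = real k * (real k + 1) / 2"
  by (induction k) (simp_all add: field_simps)

lemma sum_lessThan_real: "(\<Sum>c<n. real c) = real n * (real n - 1) / 2"
  by (induction n) (simp_all add: field_simps)

lemma sum_atMost_triangular: "(\<Sum>c\<le>k. real k + 1 - real c) = (real k + 1) * (real k + 2) / 2"
proof -
  have "(\<Sum>c\<le>k. real k + 1 - real c) = (real k + 1) * (real k + 1) - (\<Sum>c\<le>k. real c)"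
    by (simp add: sum_subtractf)
  then show ?thesis
    by (simp add: sum_atMost_real field_simps)
qed

lemma sum_atMost_tetrahedral:
  "(\<Sum>c\<le>k. real c * (real k + 1 - real c)) = real k * (real k + 1) * (real k + 2) / 6"
proof (induction k)
  case (Suc k)
  have "(\<Sum>c\<le>Suc k. real c * (real (Suc k) + 1 - real c))
      = (\<Sum>c\<le>k. real c * (real k + 1 - real c) + real c) + (real k + 1)"
    by (simp add: algebra_simps)
  also have "\<dots> = real k * (real k + 1) * (real k + 2) / 6 + real k * (real k + 1) / 2 + (real k + 1)"
    by (simp add: sum.distrib Suc.IH sum_atMost_real)
  finally show ?case
    by (simp add: field_simps)
qed simp

lemma card_Ak_index: "real (card (Ak_index k)) = (real k + 1) * (real k + 2) / 2"
proof -
  have "real (card (Ak_index k)) = (\<Sum>p\<in>Ak_index k. (\<lambda>_. 1::real) (fst p))"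
    by simp
  also have "\<dots> = (\<Sum>c\<le>k. real (k - c + 1) * 1)"
    by (rule sum_Ak_index_fst)
  also have "\<dots> = (\<Sum>c\<le>k. real k + 1 - real c)"
    by (intro sum.cong) (auto simp: of_nat_diff)
  finally show ?thesis
    by (simp add: sum_atMost_triangular)
qed

lemma sum_fst_Ak_index:
  "(\<Sum>p\<in>Ak_index k. real (fst p)) = real k * (real k + 1) * (real k + 2) / 6"
proof -
  have "(\<Sum>p\<in>Ak_index k. real (fst p)) = (\<Sum>c\<le>k. real c * (real k + 1 - real c))"
    unfolding sum_Ak_index_fst by (intro sum.cong) (auto simp: of_nat_diff algebra_simps)
  then show ?thesis
    by (simp add: sum_atMost_tetrahedral)
qed

lemma SA_pure_NE_Ak_nonempty:
  assumes "0 < k" "SA_pure_NE \<delta> (Ak_index k) (Ak_util k) L1 L2"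
  shows "L1 \<union> L2 \<noteq> {}"
proof
  assume "L1 \<union> L2 = {}"
  then have "fst (Ak_util k (k, 0)) \<le> fst (unif_avg (Ak_index k) (Ak_util k))"
    using SA_pure_NE_empty_le_avg[of \<delta> "Ak_index k" "Ak_util k" "(k, 0)"] assms(2)
    by (simp add: Ak_index_def fst_unif_avg)
  moreover have "fst (unif_avg (Ak_index k) (Ak_util k)) = 1/3"
  proof -
    have "(real k + 1) * (real k + 2) > 0"
      by (intro mult_pos_pos) linarith+
    then show ?thesis
      using assms(1) by (simp add: unif_avg_Ak_util avg_def sum_fst_Ak_index card_Ak_index)
  qed
  ultimately show False
    using assms(1) by (simp add: Ak_util_def)
qed

section \<open>Counting lattice points\<close>

text \<open>The conditions that best responses impose on the support \<open>U = L1 \<union> L2\<close> of an equilibrium,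
  in the integer coordinates of A(k).\<close>

definition stable_support :: "nat \<Rightarrow> (nat \<times> nat) set \<Rightarrow> bool" where
  "stable_support k U \<longleftrightarrow> U \<subseteq> Ak_index k \<and> U \<noteq> {} \<and>
     (\<forall>p \<in> Ak_index k - U. real (fst p) \<le> avg (real \<circ> fst) U \<and> real (snd p) \<le> avg (real \<circ> snd) U) \<and>
     (\<forall>p \<in> U. avg (real \<circ> fst) U \<le> real (fst p) \<or> avg (real \<circ> snd) U \<le> real (snd p))"

lemma avg_swap_image: "avg f (prod.swap ` U) = avg (f \<circ> prod.swap) U"
  by (simp add: avg_def sum.reindex card_image)

lemma stable_support_swap:
  assumes "stable_support k U"
  shows "stable_support k (prod.swap ` U)"
proof -
  have comp: "(real \<circ> fst) \<circ> prod.swap = real \<circ> snd" "(real \<circ> snd) \<circ> prod.swap = real \<circ> fst"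
    by auto
  have mem: "p \<in> prod.swap ` U \<longleftrightarrow> prod.swap p \<in> U" for p :: "nat \<times> nat"
    by (metis image_iff swap_swap)
  show ?thesis
    unfolding stable_support_def avg_swap_image comp
  proof (intro conjI)
    show "prod.swap ` U \<subseteq> Ak_index k" "prod.swap ` U \<noteq> {}"
      using assms by (auto simp: stable_support_def Ak_index_def)
    show "\<forall>p \<in> Ak_index k - prod.swap ` U.
      real (fst p) \<le> avg (real \<circ> snd) U \<and> real (snd p) \<le> avg (real \<circ> fst) U"
    proof
      fix p assume "p \<in> Ak_index k - prod.swap ` U"
      then have "prod.swap p \<in> Ak_index k - U"
        using mem by simp
      then have "real (fst (prod.swap p)) \<le> avg (real \<circ> fst) U
          \<and> real (snd (prod.swap p)) \<le> avg (real \<circ> snd) U"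
        using assms unfolding stable_support_def by blast
      then show "real (fst p) \<le> avg (real \<circ> snd) U \<and> real (snd p) \<le> avg (real \<circ> fst) U"
        by simp
    qed
    show "\<forall>p \<in> prod.swap ` U. avg (real \<circ> snd) U \<le> real (fst p) \<or> avg (real \<circ> fst) U \<le> real (snd p)"
    proof
      fix p assume "p \<in> prod.swap ` U"
      then have "prod.swap p \<in> U"
        using mem by simp
      then have "avg (real \<circ> fst) U \<le> real (fst (prod.swap p))
          \<or> avg (real \<circ> snd) U \<le> real (snd (prod.swap p))"
        using assms unfolding stable_support_def by blast
      then show "avg (real \<circ> snd) U \<le> real (fst p) \<or> avg (real \<circ> fst) U \<le> real (snd p)"
        by auto
    qed
  qed
qed

lemma stable_support_avg_sum_le:
  assumes "stable_support k U"
  shows "avg (real \<circ> fst) U + avg (real \<circ> snd) U \<le> real k"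
proof -
  have fin: "finite U" and n: "real (card U) > 0"
    using assms finite_subset[OF _ finite_Ak_index] by (auto simp: stable_support_def card_gt_0_iff)
  have "(\<Sum>p\<in>U. real (fst p) + real (snd p)) \<le> (\<Sum>p\<in>U. real k)"
    using assms by (intro sum_mono) (auto simp: stable_support_def Ak_index_def)
  then show ?thesis
    using n by (simp add: avg_def sum.distrib add_divide_distrib[symmetric] pos_divide_le_eq mult.commute)
qed

lemma sum_le_sum_outside:
  assumes "finite I" "U \<subseteq> I" "P \<subseteq> I" "P \<inter> U = {}" "sum g U = 0"
    and "\<And>p. p \<in> I - U - P \<Longrightarrow> g p \<le> (0::real)"
  shows "sum g I \<le> sum g P"
proof -
  have fin: "finite U" "finite P"
    using assms(1-3) finite_subset by blast+
  have disj: "U \<inter> P = {}"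
    using assms(4) by blast
  have "sum g I = sum g (I - U - P) + sum g (U \<union> P)"
    using sum.subset_diff[of "U \<union> P" I g] assms(1-3) by (simp add: Diff_Un Diff_Int_distrib2 set_diff_eq)
  also have "sum g (U \<union> P) = sum g P"
    using sum.union_disjoint[OF fin disj, of g] assms(5) by simp
  also have "sum g (I - U - P) \<le> 0"
    using assms(6) by (intro sum_nonpos) auto
  finally show ?thesis
    by simp
qed

lemma rectangle_deficit_ge:
  fixes H1 H2 :: real
  assumes "0 \<le> H1" "0 \<le> H2"
  shows "H1\<^sup>2 * H2 / 2 \<le> (\<Sum>p \<in> {..<nat \<lceil>H1\<rceil>} \<times> {..<nat \<lceil>H2\<rceil>}. H1 - real (fst p))"
proof -
  define a where "a = real (nat \<lceil>H1\<rceil>)"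
  define b where "b = real (nat \<lceil>H2\<rceil>)"
  have a: "H1 \<le> a" "a < H1 + 1" and b: "H2 \<le> b"
    using assms by (auto simp: a_def b_def) linarith+
  have "(\<Sum>p \<in> {..<nat \<lceil>H1\<rceil>} \<times> {..<nat \<lceil>H2\<rceil>}. H1 - real (fst p))
      = (\<Sum>c<nat \<lceil>H1\<rceil>. \<Sum>d<nat \<lceil>H2\<rceil>. H1 - real c)"
    by (subst sum.cartesian_product) (simp add: split_def)
  also have "\<dots> = b * (a * H1 - (\<Sum>c<nat \<lceil>H1\<rceil>. real c))"
    by (simp add: a_def b_def sum_distrib_left[symmetric] sum_subtractf)
  finally have sum_eq: "(\<Sum>p \<in> {..<nat \<lceil>H1\<rceil>} \<times> {..<nat \<lceil>H2\<rceil>}. H1 - real (fst p))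
      = b * (a * H1 - a * (a - 1) / 2)"
    by (simp add: sum_lessThan_real a_def)
  have "(a - H1)\<^sup>2 \<le> a - H1"
    using a by (simp add: power2_eq_square mult_left_le_one_le)
  then have "H1\<^sup>2 / 2 \<le> a * H1 - a * (a - 1) / 2"
    using assms(1) by (simp add: power2_eq_square field_simps)
  then have "H2 * (H1\<^sup>2 / 2) \<le> b * (a * H1 - a * (a - 1) / 2)"
    using b assms by (intro mult_mono) auto
  then show ?thesis
    by (simp add: sum_eq algebra_simps)
qed

text \<open>Compare the sum of \<open>fst p - H1\<close> over A(k) with the sum over the lattice rectangle strictly
  below \<open>(H1, H2)\<close>: the rectangle lies in A(k), misses U, and contains every point with a
  positive summand outside U.\<close>

lemma stable_support_count:
  assumes "stable_support k U"
  defines "H1 \<equiv> avg (real \<circ> fst) U" and "H2 \<equiv> avg (real \<circ> snd) U"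
  shows "(real k + 1) * (real k + 2) / 2 * (real k / 3 - H1) + H1\<^sup>2 * H2 / 2 \<le> 0"
proof -
  define P where "P = {..<nat \<lceil>H1\<rceil>} \<times> {..<nat \<lceil>H2\<rceil>}"
  have U: "U \<subseteq> Ak_index k" "U \<noteq> {}" "finite U"
    using assms(1) finite_subset[OF _ finite_Ak_index] by (auto simp: stable_support_def)
  have H: "0 \<le> H1" "0 \<le> H2"
    by (simp_all add: H1_def H2_def avg_def sum_nonneg)
  have below: "p \<in> P \<longleftrightarrow> real (fst p) < H1 \<and> real (snd p) < H2" for p
    using H by (cases p) (auto simp: P_def less_ceiling_iff zless_nat_eq_int_zless)
  have sub: "P \<subseteq> Ak_index k"
  proof
    fix p assume "p \<in> P"
    then have "real (fst p) + real (snd p) < H1 + H2"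
      using below[of p] by simp
    also have "\<dots> \<le> real k"
      using stable_support_avg_sum_le[OF assms(1)] by (simp add: H1_def H2_def)
    finally show "p \<in> Ak_index k"
      by (cases p) (simp add: Ak_index_def)
  qed
  have disj: "P \<inter> U = {}"
  proof -
    have "p \<notin> P" if "p \<in> U" for p
    proof -
      have "H1 \<le> real (fst p) \<or> H2 \<le> real (snd p)"
        using assms(1) that unfolding stable_support_def H1_def H2_def by blast
      then show ?thesis
        using below[of p] by auto
    qed
    then show ?thesis
      by blast
  qed
  have zero: "(\<Sum>p\<in>U. real (fst p) - H1) = 0"
    using U by (simp add: sum_subtractf H1_def avg_def card_gt_0_iff)
  have outside: "real (fst p) - H1 \<le> 0" if "p \<in> Ak_index k - U - P" for p
    using assms(1) that unfolding stable_support_def H1_def by auto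
  have "(\<Sum>p\<in>Ak_index k. real (fst p) - H1) \<le> (\<Sum>p\<in>P. real (fst p) - H1)"
    using finite_Ak_index U(1) sub disj zero outside by (rule sum_le_sum_outside)
  also have "\<dots> = - (\<Sum>p\<in>P. H1 - real (fst p))"
    by (simp add: sum_subtractf)
  also have "\<dots> \<le> - (H1\<^sup>2 * H2 / 2)"
    using rectangle_deficit_ge[OF H] by (simp add: P_def)
  also have "(\<Sum>p\<in>Ak_index k. real (fst p) - H1) = (real k + 1) * (real k + 2) / 2 * (real k / 3 - H1)"
    by (simp add: sum_subtractf sum_fst_Ak_index card_Ak_index field_simps)
  finally show ?thesis
    by linarith
qed

section \<open>The cubic \<open>x\<^sup>3 - x + 1/3\<close>\<close>

lemma cubic_root_le_two_fifths:
  fixes x :: real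
  assumes "0 \<le> x" "x \<le> 1/2" "x ^ 3 - x + 1/3 = 0"
  shows "x \<le> 2/5"
proof (rule ccontr)
  assume "\<not> x \<le> 2/5"
  moreover have "x\<^sup>2 \<le> (1/2)\<^sup>2"
    using assms(1,2) by (intro power_mono) auto
  ultimately have "(x - 2/5) * (x\<^sup>2 + 2/5 * x + 4/25 - 1) < 0"
    using assms(2) by (intro mult_pos_neg) (auto simp: power_divide)
  moreover have "x ^ 3 - x + 1/3 = (x - 2/5) * (x\<^sup>2 + 2/5 * x + 4/25 - 1) + (8/125 - 2/5 + 1/3)"
    by (simp add: power2_eq_square power3_eq_cube field_simps)
  ultimately show False
    using assms(3) by simp
qed

text \<open>With \<open>l = k\<^sup>2 / ((k + 1) (k + 2))\<close> and \<open>h\<^sub>i = H\<^sub>i / k\<close>, these are the two lattice-point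
  counts; eliminating \<open>h2\<close> leaves a cubic inequality for \<open>h1\<close>.\<close>

lemma counts_imp_cubic_bound:
  fixes h1 h2 l :: real
  assumes "0 < l" "0 \<le> h1" "0 \<le> h2" "h1 \<le> 2/3"
    and "l * h1\<^sup>2 * h2 \<le> h1 - 1/3" "1/3 \<le> h2 - l * h1 * h2\<^sup>2"
  shows "l * h1 ^ 3 \<le> h1 - 1/3"
proof -
  define s where "s = l * h1\<^sup>2 * h2"
  define r where "r = h1 - 1/3"
  have "l * h1 ^ 3 * (1/3) \<le> l * h1 ^ 3 * (h2 - l * h1 * h2\<^sup>2)"
    using assms by (intro mult_left_mono) auto
  also have "\<dots> = s * h1 - s\<^sup>2"
    by (simp add: s_def power2_eq_square power3_eq_cube algebra_simps)
  also have "s * h1 - s\<^sup>2 \<le> r * h1 - r\<^sup>2"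
  proof -
    have "0 \<le> (r - s) * (h1 - r - s)"
      using assms by (intro mult_nonneg_nonneg) (auto simp: r_def s_def)
    then show ?thesis
      by (simp add: algebra_simps power2_eq_square)
  qed
  also have "r * h1 - r\<^sup>2 = (h1 - 1/3) / 3"
    by (simp add: r_def power2_eq_square algebra_simps)
  finally show ?thesis
    by simp
qed

lemma gap_below_cubic_root:
  fixes K l h x :: real
  assumes x: "0 \<le> x" "x \<le> 2/5" "x ^ 3 - x + 1/3 = 0"
    and "0 \<le> h" "l \<le> 1" "l * h ^ 3 \<le> h - 1/3" "0 < K" "K * (1 - l) \<le> 3"
  shows "K * (x - h) \<le> 1/2"
proof (cases "x \<le> h")
  case False
  have "x - h \<le> x ^ 3 - l * h ^ 3"
    using assms(3,6) by simp
  also have "\<dots> = (1 - l) * x ^ 3 + l * (x ^ 3 - h ^ 3)"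
    by (simp add: algebra_simps)
  also have "\<dots> \<le> (1 - l) * x ^ 3 + (x ^ 3 - h ^ 3)"
    using False assms(4,5) by (auto intro!: mult_right_mono[of l 1, simplified] power_mono)
  also have "x ^ 3 - h ^ 3 = (x - h) * (x\<^sup>2 + x * h + h\<^sup>2)"
    by (simp add: algebra_simps power2_eq_square power3_eq_cube)
  also have "\<dots> \<le> (x - h) * (3 * x\<^sup>2)"
  proof -
    have "h * h \<le> x * x" "x * h \<le> x * x"
      using False assms(4) x(1) by (auto intro: mult_mono mult_left_mono)
    then show ?thesis
      using False by (intro mult_left_mono) (auto simp: power2_eq_square)
  qed
  finally have "(x - h) * (1 - 3 * x\<^sup>2) \<le> (1 - l) * x ^ 3"
    by (simp add: algebra_simps)
  then have "K * (x - h) * (1 - 3 * x\<^sup>2) \<le> K * (1 - l) * x ^ 3"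
    using assms(7) by (simp add: mult.assoc mult_left_mono)
  also have "\<dots> \<le> 3 * x ^ 3"
    using assms(8) x by (intro mult_right_mono) auto
  also have "\<dots> \<le> 1/2 * (1 - 3 * x\<^sup>2)"
  proof -
    have "x ^ 3 \<le> (2/5) ^ 3" "x\<^sup>2 \<le> (2/5)\<^sup>2"
      using x by (intro power_mono; simp)+
    then show ?thesis
      by (simp add: power_divide)
  qed
  finally show ?thesis
  proof (rule mult_right_le_imp_le)
    have "x\<^sup>2 \<le> (2/5)\<^sup>2"
      using x by (intro power_mono) auto
    then show "0 < 1 - 3 * x\<^sup>2"
      by (simp add: power_divide)
  qed
next
  case True
  then have "K * (x - h) \<le> 0"
    using assms(7) by (intro mult_nonneg_nonpos) auto
  then show ?thesis
    by simp
qed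

lemma normalized_count:
  fixes K H1 H2 :: real
  assumes "0 < K" "(K + 1) * (K + 2) / 2 * (K / 3 - H1) + H1\<^sup>2 * H2 / 2 \<le> 0"
  shows "K\<^sup>2 / ((K + 1) * (K + 2)) * (H1 / K)\<^sup>2 * (H2 / K) \<le> H1 / K - 1/3"
proof -
  define N where "N = (K + 1) * (K + 2)"
  have NK: "0 < N * K"
    using assms(1) by (simp add: N_def)
  have "N * (K / 3 - H1) + H1\<^sup>2 * H2 = 2 * ((K + 1) * (K + 2) / 2 * (K / 3 - H1) + H1\<^sup>2 * H2 / 2)"
    by (simp add: N_def field_simps)
  moreover have "(H1 / K - 1/3) * (N * K) = - (N * (K / 3 - H1))"
    using assms(1) by (simp add: field_simps)
  ultimately have "H1\<^sup>2 * H2 \<le> (H1 / K - 1/3) * (N * K)"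
    using assms(2) by (smt (verit))
  then have "H1\<^sup>2 * H2 / (N * K) \<le> H1 / K - 1/3"
    using NK by (simp add: pos_divide_le_eq)
  moreover have "K\<^sup>2 / ((K + 1) * (K + 2)) * (H1 / K)\<^sup>2 * (H2 / K) = H1\<^sup>2 * H2 / (N * K)"
    using assms(1) by (simp add: N_def field_simps power2_eq_square)
  ultimately show ?thesis
    by simp
qed

lemma count_weight_bounds:
  fixes K :: real
  assumes "0 < K"
  shows "0 < K\<^sup>2 / ((K + 1) * (K + 2))" "K\<^sup>2 / ((K + 1) * (K + 2)) \<le> 1"
    "K * (1 - K\<^sup>2 / ((K + 1) * (K + 2))) \<le> 3"
proof -
  have N: "0 < (K + 1) * (K + 2)"
    using assms by simp
  then show "0 < K\<^sup>2 / ((K + 1) * (K + 2))"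
    using assms by simp
  have "K\<^sup>2 \<le> (K + 1) * (K + 2)"
    using assms by (simp add: power2_eq_square algebra_simps)
  then show "K\<^sup>2 / ((K + 1) * (K + 2)) \<le> 1"
    using N by simp
  have "K * (1 - K\<^sup>2 / ((K + 1) * (K + 2))) = K * (3 * K + 2) / ((K + 1) * (K + 2))"
    using N by (simp add: field_simps power2_eq_square)
  also have "\<dots> \<le> 3"
    using assms N by (simp add: pos_divide_le_eq algebra_simps)
  finally show "K * (1 - K\<^sup>2 / ((K + 1) * (K + 2))) \<le> 3" .
qed

lemma counts_imp_lower_bound:
  fixes k :: nat and H1 H2 x :: real
  assumes "0 < k" "0 \<le> x" "x \<le> 1/2" "x ^ 3 - x + 1/3 = 0" "0 \<le> H1" "0 \<le> H2"
    and "(real k + 1) * (real k + 2) / 2 * (real k / 3 - H1) + H1\<^sup>2 * H2 / 2 \<le> 0"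
    and "(real k + 1) * (real k + 2) / 2 * (real k / 3 - H2) + H2\<^sup>2 * H1 / 2 \<le> 0"
  shows "real k * x - 1/2 \<le> H1"
proof -
  define K where "K = real k"
  define l where "l = K\<^sup>2 / ((K + 1) * (K + 2))"
  define h1 where "h1 = H1 / K"
  define h2 where "h2 = H2 / K"
  have K: "0 < K"
    using assms(1) by (simp add: K_def)
  have H1: "H1 = K * h1"
    using K by (simp add: h1_def)
  have h: "0 \<le> h1" "0 \<le> h2"
    using K assms(5,6) by (simp_all add: h1_def h2_def)
  have A: "l * h1\<^sup>2 * h2 \<le> h1 - 1/3"
    using normalized_count[OF K] assms(7) by (simp add: K_def l_def h1_def h2_def)
  have "l * h2\<^sup>2 * h1 \<le> h2 - 1/3"
    using normalized_count[OF K] assms(8) by (simp add: K_def l_def h1_def h2_def)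
  then have B: "1/3 \<le> h2 - l * h1 * h2\<^sup>2"
    by (simp add: algebra_simps)
  have l: "0 < l" "l \<le> 1" "K * (1 - l) \<le> 3"
    using count_weight_bounds[OF K] by (simp_all add: l_def)
  have x: "x \<le> 2/5"
    using cubic_root_le_two_fifths assms(2-4) by blast
  show ?thesis
  proof (cases "h1 \<le> 2/3")
    case True
    have "l * h1 ^ 3 \<le> h1 - 1/3"
      using counts_imp_cubic_bound[OF l(1) h True A B] .
    then have "K * (x - h1) \<le> 1/2"
      using gap_below_cubic_root[OF assms(2) x assms(4) h(1) l(2) _ K l(3)] by blast
    then show ?thesis
      by (simp add: H1 K_def algebra_simps)
  next
    case False
    then have "K * x \<le> K * h1"
      using K x by (intro mult_left_mono) auto
    then show ?thesis
      by (simp add: H1 K_def)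
  qed
qed

lemma stable_support_lower_bound:
  assumes "0 < k" "0 \<le> x" "x \<le> 1/2" "x ^ 3 - x + 1/3 = 0" "stable_support k U"
  shows "real k * x - 1/2 \<le> avg (real \<circ> fst) U"
proof -
  have swap: "avg (real \<circ> fst) (prod.swap ` U) = avg (real \<circ> snd) U"
    "avg (real \<circ> snd) (prod.swap ` U) = avg (real \<circ> fst) U"
    by (simp_all add: avg_swap_image comp_def)
  have "0 \<le> avg (real \<circ> fst) U" "0 \<le> avg (real \<circ> snd) U"
    by (simp_all add: avg_def sum_nonneg)
  then show ?thesis
    using counts_imp_lower_bound[OF assms(1-4)] stable_support_count[OF assms(5)]
      stable_support_count[OF stable_support_swap[OF assms(5)]]
    unfolding swap by blast
qed

lemma SA_pure_NE_Ak_stable_support: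
  assumes "0 < k" "0 < \<delta>" "\<delta> < 1" "SA_pure_NE \<delta> (Ak_index k) (Ak_util k) L1 L2"
  shows "stable_support k (L1 \<union> L2)"
proof -
  have U: "L1 \<union> L2 \<subseteq> Ak_index k" "L1 \<union> L2 \<noteq> {}"
    using SA_pure_NE_subset[OF assms(4)] SA_pure_NE_Ak_nonempty[OF assms(1,4)] by auto
  have "real (fst p) \<le> avg (real \<circ> fst) (L1 \<union> L2) \<and> real (snd p) \<le> avg (real \<circ> snd) (L1 \<union> L2)"
    if "p \<in> Ak_index k - (L1 \<union> L2)" for p
    using SA_pure_NE_unlisted_below_avg[OF finite_Ak_index assms(4,2) U(2), of p] that assms(1)
    by (simp add: unif_avg_Ak_util Ak_util_def divide_le_cancel)
  moreover have "avg (real \<circ> fst) (L1 \<union> L2) \<le> real (fst p) \<or> avg (real \<circ> snd) (L1 \<union> L2) \<le> real (snd p)"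
    if "p \<in> L1 \<union> L2" for p
    using SA_pure_NE_listed_not_below_avg[OF finite_Ak_index assms(4,2,3) that] assms(1)
    by (simp add: unif_avg_Ak_util Ak_util_def divide_le_cancel)
  ultimately show ?thesis
    using U by (simp add: stable_support_def)
qed

text \<open>If \<open>z\<close> were more than \<open>1/k\<close> below the line \<open>u + v = 1\<close>, the lattice point just above it
  in both coordinates would still belong to A(k).\<close>

lemma Ak_undominated_imp_efficient:
  assumes "0 < k" "0 \<le> fst z" "0 \<le> snd z"
    and "\<And>p. p \<in> Ak_index k \<Longrightarrow> fst (Ak_util k p) \<le> fst z \<or> snd (Ak_util k p) \<le> snd z"
  shows "1 - 1 / real k \<le> fst z + snd z"
proof -
  define c where "c = nat \<lfloor>real k * fst z\<rfloor> + 1"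
  define d where "d = nat \<lfloor>real k * snd z\<rfloor> + 1"
  have c: "real k * fst z < real c" "real c \<le> real k * fst z + 1"
    using assms(1,2) by (simp_all add: c_def) linarith+
  have d: "real k * snd z < real d" "real d \<le> real k * snd z + 1"
    using assms(1,3) by (simp_all add: d_def) linarith+
  have "\<not> c + d \<le> k"
  proof
    assume "c + d \<le> k"
    then have "real c \<le> real k * fst z \<or> real d \<le> real k * snd z"
      using assms(1) assms(4)[of "(c, d)"] by (simp add: Ak_index_def Ak_util_def divide_le_eq mult.commute)
    then show False
      using c d by linarith
  qed
  then have "real k - 1 \<le> real k * (fst z + snd z)"
    using c d by (simp add: algebra_simps)
  then show ?thesis
    using assms(1) by (simp add: field_simps)
qed

lemma unif_avg_Ak_util_mem_triangle:
  assumes "0 < k" "J \<subseteq> Ak_index k"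
  shows "unif_avg J (Ak_util k) \<in> utility_triangle"
proof (rule unif_avg_mem_convex[OF convex_utility_triangle])
  show "0 \<in> utility_triangle"
    by (simp add: utility_triangle_def)
  show "finite J"
    using finite_subset[OF assms(2) finite_Ak_index] .
  show "Ak_util k j \<in> utility_triangle" if "j \<in> J" for j
    using Ak_util_mem_triangle[OF assms(1)] assms(2) that by blast
qed

lemma SA_pure_NE_Ak_core_near_segment:
  assumes "0 < k" "0 < \<delta>" "\<delta> < 1" "0 \<le> x" "x \<le> 1/2" "x ^ 3 - x + 1/3 = 0"
    and NE: "SA_pure_NE \<delta> (Ak_index k) (Ak_util k) L1 L2"
  shows "\<exists>p \<in> convex hull {(x, 1 - x), (1 - x, x)}. dist (SA_core (Ak_util k) L1 L2) p \<le> 1 / real k"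
proof -
  define \<alpha> where "\<alpha> = SA_core (Ak_util k) L1 L2"
  define U where "U = L1 \<union> L2"
  have stable: "stable_support k U"
    using SA_pure_NE_Ak_stable_support[OF assms(1-3) NE] by (simp add: U_def)
  have "real k * x - 1/2 \<le> avg (real \<circ> fst) (prod.swap ` U)"
    by (rule stable_support_lower_bound[OF assms(1,4-6) stable_support_swap[OF stable]])
  then have bounds: "real k * x - 1/2 \<le> avg (real \<circ> fst) U" "real k * x - 1/2 \<le> avg (real \<circ> snd) U"
    using stable_support_lower_bound[OF assms(1,4-6) stable] by (simp_all add: avg_swap_image comp_def)
  have scaled: "x - 1 / real k / 2 \<le> A / real k" if "real k * x - 1/2 \<le> A" for A
  proof -
    have "x - 1 / real k / 2 = (real k * x - 1/2) / real k"
      using assms(1) by (simp add: field_simps)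
    also have "\<dots> \<le> A / real k"
      using that by (simp add: divide_right_mono)
    finally show ?thesis .
  qed
  have "x - 1 / real k / 2 \<le> fst (unif_avg U (Ak_util k))"
    "x - 1 / real k / 2 \<le> snd (unif_avg U (Ak_util k))"
    using scaled[OF bounds(1)] scaled[OF bounds(2)] by (simp_all add: unif_avg_Ak_util)
  then have lower: "x - 1 / real k / 2 \<le> fst \<alpha>" "x - 1 / real k / 2 \<le> snd \<alpha>"
    using SA_pure_NE_avg_le_core[OF NE assms(3)] by (auto simp: \<alpha>_def U_def)
  have "(if L1 \<inter> L2 = {} then L1 \<union> L2 else L1 \<inter> L2) \<subseteq> Ak_index k"
    using SA_pure_NE_subset[OF NE] by auto
  then have "\<alpha> \<in> utility_triangle"
    unfolding \<alpha>_def SA_core_def by (rule unif_avg_Ak_util_mem_triangle[OF assms(1)])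
  then have tri: "0 \<le> fst \<alpha>" "0 \<le> snd \<alpha>" "fst \<alpha> + snd \<alpha> \<le> 1"
    by (simp_all add: utility_triangle_def)
  have "1 - 1 / real k \<le> fst \<alpha> + snd \<alpha>"
    using Ak_undominated_imp_efficient[OF assms(1) tri(1,2)]
      SA_pure_NE_core_undominated[OF finite_Ak_index NE assms(2,3)]
      SA_pure_NE_Ak_nonempty[OF assms(1) NE]
    by (simp add: \<alpha>_def)
  moreover have "x < 1/2"
    using cubic_root_le_two_fifths[OF assms(4-6)] by simp
  ultimately show ?thesis
    using near_segment[of x "1 / real k" "fst \<alpha>" "snd \<alpha>"] lower tri by (simp add: \<alpha>_def)
qed

lemma infdist_SA_outcome_le:
  assumes "convex S" "p \<in> S" "q \<in> S" "L1 \<union> L2 \<noteq> {}" "0 \<le> \<delta>" "\<delta> \<le> 1" "0 \<le> r"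
    and "dist (SA_core a L1 L2) p \<le> r" "dist (unif_avg (L1 \<union> L2) a) q \<le> 1"
  shows "infdist (SA_outcome \<delta> I a L1 L2) S \<le> \<delta> + r"
proof -
  have "infdist (SA_outcome \<delta> I a L1 L2) S
      \<le> (1 - \<delta>) * dist (SA_core a L1 L2) p + \<delta> * dist (unif_avg (L1 \<union> L2) a) q"
    unfolding SA_outcome_eq_core[OF assms(4)]
    by (rule infdist_convex_combination_le[OF assms(1-3,5,6)])
  also have "\<dots> \<le> (1 - \<delta>) * r + \<delta> * 1"
    using assms(5,6,8,9) by (intro add_mono mult_left_mono) auto
  also have "\<dots> \<le> \<delta> + r"
    using mult_right_mono[of "1 - \<delta>" 1 r] assms(5,7) by simp
  finally show ?thesis .
qed

theorem proposition1:
  fixes k :: nat and \<delta> x :: real and L1 L2 :: "(nat \<times> nat) set"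
  assumes "k > 0"
    and "0 < \<delta>" and "\<delta> \<le> 1"
    and "0 \<le> x" and "x \<le> 1/2" and "x ^ 3 - x + 1/3 = 0"
    and "SA_pure_NE \<delta> (Ak_index k) (Ak_util k) L1 L2"
  shows "infdist (SA_outcome \<delta> (Ak_index k) (Ak_util k) L1 L2)
           (convex hull {(x, 1 - x), (1 - x, x)}) \<le> \<delta> + 1 / real k"
proof -
  have "x < 1/2"
    using cubic_root_le_two_fifths[OF assms(4-6)] by simp
  then have centre: "(1/2, 1/2) \<in> convex hull {(x, 1 - x), (1 - x, x)}"
    using antidiagonal_mem_segment[of x "1/2"] assms(4) by simp
  have sub: "L1 \<subseteq> Ak_index k" "L2 \<subseteq> Ak_index k"
    using SA_pure_NE_subset[OF assms(7)] by auto
  show ?thesis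
  proof (cases "\<delta> = 1")
    case True
    have "SA_outcome \<delta> (Ak_index k) (Ak_util k) L1 L2 \<in> utility_triangle"
      by (rule SA_outcome_mem_convex[OF convex_utility_triangle _ finite_Ak_index _ sub])
        (use Ak_util_mem_triangle[OF assms(1)] assms(2,3) in \<open>auto simp: utility_triangle_def\<close>)
    then have "dist (SA_outcome \<delta> (Ak_index k) (Ak_util k) L1 L2) (1/2, 1/2) \<le> \<delta> + 1 / real k"
      using dist_half_half_le_one True by (simp add: add_increasing2)
    then show ?thesis
      by (rule infdist_le2[OF centre])
  next
    case False
    obtain p where "p \<in> convex hull {(x, 1 - x), (1 - x, x)}"
      "dist (SA_core (Ak_util k) L1 L2) p \<le> 1 / real k"
      using SA_pure_NE_Ak_core_near_segment[OF assms(1,2) _ assms(4-7)] False assms(3) by force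
    moreover have "dist (unif_avg (L1 \<union> L2) (Ak_util k)) (1/2, 1/2) \<le> 1"
      using sub by (intro dist_half_half_le_one unif_avg_Ak_util_mem_triangle[OF assms(1)]) simp
    ultimately show ?thesis
      using infdist_SA_outcome_le[OF convex_convex_hull _ centre SA_pure_NE_Ak_nonempty[OF assms(1,7)]]
        assms(2,3) by simp
  qed
qed

end
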